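(* Let $\mathbf x,\mathbf m\in\mathbb C^d$ with $\operatorname{supp}(\widehat{\mathbf x})\subseteq[\gamma]_0$ and $\operatorname{supp}(\mathbf m)\subseteq[\delta]_0$, let $N\in\mathbb R^{d\times d}$, and let $K,L$ divide $d$. Let $\widetilde Y=F_LY_{K,L}^TF_K^T$ and $\widetilde N=F_LN_{K,L}^TF_K^T$. Suppose $K=\delta-1+\kappa$ for some integer $2\le\kappa\le\delta$ and $L=\gamma-1+\xi$ for some integer $1\le\xi\le\gamma$. Then for $\alpha\in[L]_0$ and $\omega\in[K]_0$: (i) if $0\le\alpha\le\xi-1$ and $0\le\omega\le\kappa-1$, then $\widetilde Y_{\alpha,\omega}=\frac{KL}{d^3}\left(F_d(\widehat{\mathbf x}\circ S_{-\alpha}\overline{\widehat{\mathbf x}})\right)_\omega\left(F_d(\widehat{\mathbf m}\circ S_\alpha\overline{\widehat{\mathbf m}})\right)_\omega+\widetilde N_{\alpha,\omega}$; (ii) if $0\le\alpha\le\xi-1$ and $\delta\le\omega\le K-1$, then $\widetilde Y_{\alpha,\omega}=\frac{KL}{d^3}\left(F_d(\widehat{\mathbf x}\circ S_{-\alpha}\overline{\widehat{\mathbf x}})\right)_{\omega-K}\left(F_d(\widehat{\mathbf m}\circ S_\alpha\overline{\widehat{\mathbf m}})\right)_{\omega-K}+\widetilde N_{\alpha,\omega}$; (iii) if $\gamma\le\alpha\le L-1$ and $0\le\omega\le\kappa-1$, then $\widetilde Y_{\alpha,\omega}=\frac{KL}{d^3}\left(F_d(\widehat{\mathbf x}\circ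 S_{L-\alpha}\overline{\widehat{\mathbf x}})\right)_\omega\left(F_d(\widehat{\mathbf m}\circ S_{\alpha-L}\overline{\widehat{\mathbf m}})\right)_\omega+\widetilde N_{\alpha,\omega}$; (iv) if $\gamma\le\alpha\le L-1$ and $\delta\le\omega\le K-1$, then $\widetilde Y_{\alpha,\omega}=\frac{KL}{d^3}\left(F_d(\widehat{\mathbf x}\circ S_{L-\alpha}\overline{\widehat{\mathbf x}})\right)_{\omega-K}\left(F_d(\widehat{\mathbf m}\circ S_{\alpha-L}\overline{\widehat{\mathbf m}})\right)_{\omega-K}+\widetilde N_{\alpha,\omega}$.
   Context: Vectors in $\mathbb C^d$ are indexed by $[d]_0=\{0,1,\dots,d-1\}$, with all indices interpreted modulo $d$. $F_n$ denotes the $n\times n$ DFT matrix $(F_n)_{j,k}=e^{-2\pi i jk/n}$, and $\widehat{\mathbf x}=F_d\mathbf x$. The shift is $(S_\ell\mathbf x)_n=x_{n+\ell}$; $\circ$ is the entrywise product and $\overline{\mathbf x}$ the entrywise conjugate; $\operatorname{supp}(\mathbf x)=\{n:x_n\neq0\}$. Measurements: given $\mathbf x,\mathbf m\in\mathbb C^d$ and an arbitrary real noise matrix $N\in\mathbb R^{d\times d}$, $Y\in\mathbb R^{d\times d}$ has entries $Y_{k,\ell}=\left|\sum_{n=0}^{d-1}x_nm_{n-\ell}e^{-2\pi i nk/d}\right|^2+N_{k,\ell}$ for $k,\ell\in[d]_0$. For positive integers $K,L$ dividing $d$, $Y_{K,L}$ is the $K\times L$ matrix $(Y_{K,L})_{k,\ell}=Y_{kd/K,\ell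 d/L}$ and $N_{K,L}$ is defined analogously from $N$. $\widetilde Y$ has rows indexed by $[L]_0$ and columns by $[K]_0$. *)

theory Defs
  imports Complex_Main "Jordan_Normal_Form.Matrix"
begin

text \<open>Vectors in C^d are Jordan_Normal_Form vectors of dimension d, indexed by 0..d-1;
  indices are read modulo the dimension where needed.\<close>

definition dft_mat :: "nat \<Rightarrow> complex mat" where
  "dft_mat n = mat n n (\<lambda>(j,k). exp (- 2 * of_real pi * \<i> * of_nat j * of_nat k / of_nat n))"

definition hatv :: "complex vec \<Rightarrow> complex vec" where
  "hatv x = dft_mat (dim_vec x) *\<^sub>v x"

definition idx :: "complex vec \<Rightarrow> int \<Rightarrow> complex" where
  "idx v j = v $ nat (j mod int (dim_vec v))"

definition shiftv :: "int \<Rightarrow> complex vec \<Rightarrow> complex vec" where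
  "shiftv l x = vec (dim_vec x) (\<lambda>n. idx x (int n + l))"

definition hadamard :: "complex vec \<Rightarrow> complex vec \<Rightarrow> complex vec" where
  "hadamard u v = vec (dim_vec u) (\<lambda>n. u $ n * v $ n)"

definition conjv :: "complex vec \<Rightarrow> complex vec" where
  "conjv v = map_vec cnj v"

definition meas :: "nat \<Rightarrow> complex vec \<Rightarrow> complex vec \<Rightarrow> real mat \<Rightarrow> real mat" where
  "meas d x m N = mat d d (\<lambda>(k,l).
     (cmod (\<Sum>n<d. x $ n * idx m (int n - int l)
              * exp (- 2 * of_real pi * \<i> * of_nat n * of_nat k / of_nat d)))\<^sup>2 + N $$ (k,l))"

definition subsamp :: "nat \<Rightarrow> nat \<Rightarrow> nat \<Rightarrow> real mat \<Rightarrow> real mat" where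
  "subsamp d K L A = mat K L (\<lambda>(k,l). A $$ (k * d div K, l * d div L))"

definition tildeT :: "nat \<Rightarrow> nat \<Rightarrow> real mat \<Rightarrow> complex mat" where
  "tildeT K L A = dft_mat L * transpose_mat (map_mat complex_of_real A) * transpose_mat (dft_mat K)"

end

theory Submission
  imports Defs
begin

text \<open>Each measurement is \<open>|g(k, l)|\<^sup>2\<close> plus noise, where \<open>g(k, l)\<close> is the Fourier transform of
  \<open>x\<close> windowed by the \<open>l\<close>-shift of \<open>m\<close>. Expanding \<open>x\<close> through its inverse DFT writes \<open>|g(k, l)|\<^sup>2\<close>
  as a quadruple sum over frequencies \<open>j, j'\<close> of \<open>hatv x\<close> and positions \<open>p, p'\<close> of \<open>m\<close> in which
  \<open>(k, l)\<close> enters only through two characters, so on the subsampled grid the two-dimensional DFT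
  turns each term into Kronecker combs modulo \<open>K\<close> and \<open>L\<close>. The support bounds confine \<open>j' - j\<close> and
  \<open>p - p'\<close> to windows shorter than \<open>L\<close> and \<open>K\<close>, hence exactly one alias of each comb survives, and
  the remaining double sum factors into the DFTs of the autocorrelation products of \<open>hatv x\<close> and
  \<open>hatv m\<close>.\<close>

subsection \<open>Characters of \<open>\<int>/n\<close> and the DFT matrix\<close>

definition dft_exp :: "nat \<Rightarrow> int \<Rightarrow> complex" where
  "dft_exp n t = cis (- 2 * pi * of_int t / of_nat n)"

lemma dft_exp_add: "dft_exp n (a + b) = dft_exp n a * dft_exp n b"
  unfolding dft_exp_def cis_mult
  by (rule arg_cong[where f=cis]) (cases "n = 0", simp_all add: field_simps)

lemma cnj_dft_exp: "cnj (dft_exp n a) = dft_exp n (- a)"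
  by (simp add: dft_exp_def cis_cnj)

lemma dft_exp_power: "dft_exp n a ^ p = dft_exp n (int p * a)"
  by (simp add: dft_exp_def DeMoivre algebra_simps)

lemma dft_exp_multiple:
  assumes "0 < n"
  shows "dft_exp n (int n * q) = 1"
proof -
  have "- 2 * pi * of_int (int n * q) / of_nat n = 2 * pi * of_int (- q)"
    using assms by (simp add: field_simps)
  then show ?thesis
    unfolding dft_exp_def by (metis Ints_of_int cis_multiple_2pi)
qed

lemma dft_exp_mod_mult:
  assumes "0 < n"
  shows "dft_exp n ((a mod int n) * b) = dft_exp n (a * b)"
proof -
  have "a * b = (a mod int n + int n * (a div int n)) * b"
    by simp
  also have "\<dots> = (a mod int n) * b + int n * (a div int n * b)"
    by (simp only: distrib_right mult.assoc)
  finally have "a * b = (a mod int n) * b + int n * (a div int n * b)" .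
  then show ?thesis
    by (simp only: dft_exp_add dft_exp_multiple[OF assms] mult_1_right)
qed

lemma dft_exp_mod_mult_add:
  assumes "0 < n"
  shows "dft_exp n ((a mod int n) * (b mod int n) + c) = dft_exp n (a * b + c)"
proof -
  have "dft_exp n ((a mod int n) * (b mod int n)) = dft_exp n (a * b)"
    using dft_exp_mod_mult[OF assms] by (metis mult.commute)
  then show ?thesis
    by (simp only: dft_exp_add)
qed

lemma dft_exp_eq_1_iff:
  assumes "0 < n"
  shows "dft_exp n u = 1 \<longleftrightarrow> int n dvd u"
proof
  assume "int n dvd u"
  then show "dft_exp n u = 1"
    using dft_exp_multiple[OF assms] by auto
next
  assume "dft_exp n u = 1"
  then have "cos (- 2 * pi * of_int u / of_nat n) = 1"
    unfolding dft_exp_def by (metis cis.sel(1) one_complex.sel(1))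
  then obtain k :: int where "- 2 * pi * of_int u / of_nat n = of_int k * 2 * pi"
    using cos_one_2pi_int by blast
  then have "pi * (of_int u + of_int k * of_nat n) = 0"
    using assms by (simp add: field_simps)
  then have "real_of_int u = real_of_int (- (k * int n))"
    by simp
  then have "u = - (k * int n)"
    by (simp only: of_int_eq_iff)
  then show "int n dvd u" by simp
qed

lemma sum_dft_exp:
  assumes "0 < n"
  shows "(\<Sum>p<n. dft_exp n (int p * u)) = (if int n dvd u then of_nat n else 0)"
proof (cases "int n dvd u")
  case True
  then obtain q where "u = int n * q" ..
  then have "dft_exp n (int p * u) = 1" for p
    using dft_exp_multiple[OF assms, of "int p * q"] by (simp add: algebra_simps)
  then show ?thesis using True by simp
next
  case False
  then have ne: "dft_exp n u \<noteq> 1"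
    using dft_exp_eq_1_iff[OF assms] by simp
  have "(\<Sum>p<n. dft_exp n (int p * u)) = (\<Sum>p<n. dft_exp n u ^ p)"
    by (simp add: dft_exp_power)
  also have "\<dots> = (dft_exp n u ^ n - 1) / (dft_exp n u - 1)"
    using ne by (rule geometric_sum)
  also have "dft_exp n u ^ n = 1"
    using dft_exp_power dft_exp_multiple[OF assms] by simp
  finally show ?thesis using False by simp
qed

lemma dft_exp_rescale:
  assumes "d = M * q" "0 < d"
  shows "dft_exp d (a * int q * u) = dft_exp M (a * u)"
proof -
  have "0 < M" "0 < q"
    using assms by simp_all
  then show ?thesis
    using assms unfolding dft_exp_def by (simp add: field_simps)
qed

lemma exp_eq_dft_exp:
  "exp (- 2 * of_real pi * \<i> * of_nat j * of_nat k / of_nat n) = dft_exp n (int j * int k)"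
  unfolding dft_exp_def cis_conv_exp by (simp add: algebra_simps)

lemma dft_mat_eq: "dft_mat n = mat n n (\<lambda>(j, k). dft_exp n (int j * int k))"
  unfolding dft_mat_def exp_eq_dft_exp ..

lemma dim_hatv [simp]: "dim_vec (hatv v) = dim_vec v"
  by (simp add: hatv_def dft_mat_eq)

lemma hatv_nth:
  assumes "dim_vec v = d" "j < d"
  shows "hatv v $ j = (\<Sum>r<d. v $ r * dft_exp d (int r * int j))"
  using assms unfolding hatv_def
  by (auto simp: dft_mat_eq scalar_prod_def atLeast0LessThan mult.commute intro!: sum.cong)

lemma zdvd_abs_less_imp_zero:
  fixes P u :: int
  assumes "P dvd u" "\<bar>u\<bar> < P"
  shows "u = 0"
proof (rule ccontr)
  assume "u \<noteq> 0"
  then have "\<bar>P\<bar> \<le> \<bar>u\<bar>"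
    using assms(1) dvd_imp_le_int by blast
  then show False
    using assms(2) by linarith
qed

lemma dvd_diff_iff_eq_nat_mod:
  assumes "n < d"
  shows "int d dvd int n - a \<longleftrightarrow> n = nat (a mod int d)"
proof -
  have "int d dvd int n - a \<longleftrightarrow> int n mod int d = a mod int d"
    by (simp add: mod_eq_dvd_iff)
  also have "\<dots> \<longleftrightarrow> int n = a mod int d"
    using assms by simp
  also have "\<dots> \<longleftrightarrow> n = nat (a mod int d)"
    using assms pos_mod_sign[of "int d" a] by linarith
  finally show ?thesis .
qed

lemma sum_if_dvd_diff:
  assumes "0 < d"
  shows "(\<Sum>r<d. if int d dvd int r - a then f r else 0) = f (nat (a mod int d))"
proof -
  have "nat (a mod int d) < d"
    using assms by (simp add: nat_less_iff)
  moreover have "(\<Sum>r<d. if int d dvd int r - a then f r else 0)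
      = (\<Sum>r<d. if r = nat (a mod int d) then f r else 0)"
    by (intro sum.cong refl) (simp add: dvd_diff_iff_eq_nat_mod)
  ultimately show ?thesis by simp
qed

lemma sum_if_dvd_shift:
  assumes "0 < d"
  shows "(\<Sum>n<d. f n (nat ((int n - l) mod int d))) = (\<Sum>p<d. f (nat ((int p + l) mod int d)) p)"
proof -
  have "(\<Sum>n<d. f n (nat ((int n - l) mod int d)))
      = (\<Sum>n<d. \<Sum>p<d. if int d dvd int p - (int n - l) then f n p else 0)"
    using assms by (simp add: sum_if_dvd_diff)
  also have "\<dots> = (\<Sum>p<d. \<Sum>n<d. if int d dvd int n - (int p + l) then f n p else 0)"
  proof -
    have "int d dvd int p - (int n - l) \<longleftrightarrow> int d dvd int n - (int p + l)" for n p
      using dvd_minus_iff[of "int d" "int n - (int p + l)"] by (simp add: algebra_simps)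
    then show ?thesis
      by (subst sum.swap) simp
  qed
  also have "\<dots> = (\<Sum>p<d. f (nat ((int p + l) mod int d)) p)"
    using assms by (simp add: sum_if_dvd_diff)
  finally show ?thesis .
qed

text \<open>Both divisibilities amount to \<open>u + s = 0\<close>.\<close>

lemma dvd_add_iff_dvd_in_window:
  fixes P D r s u :: int
  assumes "P dvd r - s" "\<bar>u + s\<bar> < P" "P \<le> D"
  shows "P dvd r + u \<longleftrightarrow> D dvd u + s"
proof -
  have "P dvd r + u \<longleftrightarrow> P dvd u + s"
    using assms(1) dvd_add_left_iff[of P "r - s" "u + s"] by (simp add: algebra_simps)
  also have "\<dots> \<longleftrightarrow> u + s = 0"
    using assms(2) zdvd_abs_less_imp_zero[of P "u + s"] by auto
  also have "\<dots> \<longleftrightarrow> D dvd u + s"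
    using assms(2,3) zdvd_abs_less_imp_zero[of D "u + s"] by auto
  finally show ?thesis .
qed

subsection \<open>Inversion and spectra of autocorrelations\<close>

lemma sum_swap_out:
  "(\<Sum>a\<in>A. \<Sum>b\<in>B. \<Sum>c\<in>C. f a b c) = (\<Sum>c\<in>C. \<Sum>a\<in>A. \<Sum>b\<in>B. f a b c)"
proof -
  have "(\<Sum>a\<in>A. \<Sum>b\<in>B. \<Sum>c\<in>C. f a b c) = (\<Sum>a\<in>A. \<Sum>c\<in>C. \<Sum>b\<in>B. f a b c)"
    by (rule sum.cong[OF refl], rule sum.swap)
  also have "\<dots> = (\<Sum>c\<in>C. \<Sum>a\<in>A. \<Sum>b\<in>B. f a b c)"
    by (rule sum.swap)
  finally show ?thesis .
qed

lemma inverse_dft: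
  assumes "dim_vec v = d" "q < d"
  shows "v $ q = (\<Sum>j<d. hatv v $ j * dft_exp d (- (int q * int j))) / of_nat d"
proof -
  have d: "0 < d"
    using assms by simp
  have "hatv v $ j * dft_exp d (- (int q * int j)) = (\<Sum>r<d. v $ r * dft_exp d (int j * (int r - int q)))"
    if "j < d" for j
  proof -
    have "dft_exp d (int r * int j) * dft_exp d (- (int q * int j)) = dft_exp d (int j * (int r - int q))" for r
      unfolding dft_exp_add[symmetric] by (simp add: algebra_simps)
    then show ?thesis
      using assms that by (simp add: hatv_nth sum_distrib_right mult.assoc)
  qed
  then have "(\<Sum>j<d. hatv v $ j * dft_exp d (- (int q * int j)))
      = (\<Sum>j<d. \<Sum>r<d. v $ r * dft_exp d (int j * (int r - int q)))"
    by simp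
  also have "\<dots> = (\<Sum>r<d. v $ r * (\<Sum>j<d. dft_exp d (int j * (int r - int q))))"
    by (subst sum.swap) (simp add: sum_distrib_left)
  also have "\<dots> = (\<Sum>r<d. if int d dvd int r - int q then v $ r * of_nat d else 0)"
    using d by (intro sum.cong refl) (simp add: sum_dft_exp)
  also have "\<dots> = v $ q * of_nat d"
    using d assms by (simp add: sum_if_dvd_diff)
  finally show ?thesis
    using d by simp
qed

lemma idx_dft_hadamard_shift:
  assumes "dim_vec v = d" "0 < d"
  shows "idx (dft_mat d *\<^sub>v hadamard (hatv v) (shiftv s (conjv (hatv v)))) t
    = (\<Sum>j<d. hatv v $ j * cnj (hatv v $ nat ((int j + s) mod int d)) * dft_exp d (int j * t))"
proof -
  define i where "i = nat (t mod int d)"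
  have "i < d" "int i = t mod int d"
    unfolding i_def using assms by (simp_all add: nat_less_iff)
  moreover have "nat ((int j + s) mod int d) < d" for j
    using assms by (simp add: nat_less_iff)
  moreover have "dft_exp d (int i * int j) = dft_exp d (int j * t)" for j
    using \<open>int i = t mod int d\<close> dft_exp_mod_mult[OF assms(2), of t "int j"] by (simp add: mult.commute)
  ultimately show ?thesis
    using assms unfolding idx_def
    by (auto simp: dft_mat_eq scalar_prod_def atLeast0LessThan hadamard_def shiftv_def conjv_def
        idx_def i_def[symmetric] mult_ac intro!: sum.cong)
qed

lemma hatv_mult_cnj_hatv:
  assumes "dim_vec v = d" "q < d"
  shows "hatv v $ q * cnj (hatv v $ nat ((int q + s) mod int d))
    = (\<Sum>n<d. \<Sum>n'<d. v $ n * cnj (v $ n') * dft_exp d (- (int n' * s)) * dft_exp d (int q * (int n - int n')))"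
proof -
  have d: "0 < d"
    using assms by simp
  have "nat ((int q + s) mod int d) < d"
    using d by (simp add: nat_less_iff)
  then have "hatv v $ q * cnj (hatv v $ nat ((int q + s) mod int d))
    = (\<Sum>n<d. v $ n * dft_exp d (int n * int q)) * (\<Sum>n'<d. cnj (v $ n') * dft_exp d (- (int n' * (int q + s))))"
    using assms d hatv_nth[OF assms(1)] dft_exp_mod_mult[OF d, of "int q + s" "- int n'" for n']
    by (simp add: cnj_sum cnj_dft_exp mult.commute)
  also have "\<dots> = (\<Sum>n<d. \<Sum>n'<d. v $ n * cnj (v $ n') * dft_exp d (- (int n' * s)) * dft_exp d (int q * (int n - int n')))"
  proof -
    have "dft_exp d (int n * int q) * dft_exp d (- (int n' * (int q + s)))
        = dft_exp d (- (int n' * s)) * dft_exp d (int q * (int n - int n'))" for n n'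
      unfolding dft_exp_add[symmetric] by (simp add: algebra_simps)
    then show ?thesis
      by (simp add: sum_product mult_ac)
  qed
  finally show ?thesis .
qed

lemma idx_dft_hadamard_shift_time:
  assumes "dim_vec v = d" "0 < d"
  shows "idx (dft_mat d *\<^sub>v hadamard (hatv v) (shiftv s (conjv (hatv v)))) t
    = of_nat d * (\<Sum>n<d. v $ n * cnj (v $ nat ((int n + t) mod int d)) * dft_exp d (- ((int n + t) * s)))"
proof -
  have "idx (dft_mat d *\<^sub>v hadamard (hatv v) (shiftv s (conjv (hatv v)))) t
     = (\<Sum>q<d. \<Sum>n<d. \<Sum>n'<d. v $ n * cnj (v $ n') * dft_exp d (- (int n' * s)) * dft_exp d (int q * (t + int n - int n')))"
  proof -
    have "dft_exp d (int q * (int n - int n')) * dft_exp d (int q * t) = dft_exp d (int q * (t + int n - int n'))"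
      for q n n'
      unfolding dft_exp_add[symmetric] by (simp add: algebra_simps)
    then show ?thesis
      using assms by (simp add: idx_dft_hadamard_shift hatv_mult_cnj_hatv sum_distrib_right mult.assoc)
  qed
  also have "\<dots> = (\<Sum>n<d. \<Sum>n'<d. \<Sum>q<d. v $ n * cnj (v $ n') * dft_exp d (- (int n' * s)) * dft_exp d (int q * (t + int n - int n')))"
    by (rule sum_swap_out[symmetric])
  also have "\<dots> = (\<Sum>n<d. \<Sum>n'<d. v $ n * cnj (v $ n') * dft_exp d (- (int n' * s)) *
        (\<Sum>q<d. dft_exp d (int q * (t + int n - int n'))))"
    by (simp add: sum_distrib_left)
  also have "\<dots> = (\<Sum>n<d. \<Sum>n'<d. if int d dvd int n' - (int n + t)
        then of_nat d * (v $ n * cnj (v $ n') * dft_exp d (- (int n' * s))) else 0)"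
  proof -
    have "int d dvd t + int n - int n' \<longleftrightarrow> int d dvd int n' - (int n + t)" for n n'
      using dvd_minus_iff[of "int d" "int n' - (int n + t)"] by (simp add: algebra_simps)
    then show ?thesis
      using assms by (intro sum.cong refl) (simp add: sum_dft_exp mult_ac)
  qed
  also have "\<dots> = of_nat d * (\<Sum>n<d. v $ n * cnj (v $ nat ((int n + t) mod int d)) * dft_exp d (- ((int n + t) * s)))"
    using assms dft_exp_mod_mult[OF assms(2), of "int n + t" "- s" for n]
    by (simp add: sum_if_dvd_diff sum_distrib_left)
  finally show ?thesis .
qed

subsection \<open>The windowed Fourier transform behind the measurements\<close>

definition window_ft :: "nat \<Rightarrow> complex vec \<Rightarrow> complex vec \<Rightarrow> nat \<Rightarrow> nat \<Rightarrow> complex" where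
  "window_ft d x m k l = (\<Sum>n<d. x $ n * idx m (int n - int l) * dft_exp d (int n * int k))"

lemma meas_nth:
  assumes "k < d" "l < d"
  shows "meas d x m N $$ (k, l) = (cmod (window_ft d x m k l))\<^sup>2 + N $$ (k, l)"
  using assms unfolding meas_def window_ft_def exp_eq_dft_exp by simp

lemma window_ft_via_hatv:
  assumes "dim_vec x = d" "dim_vec m = d" "0 < d"
  shows "window_ft d x m k l =
    (\<Sum>j<d. \<Sum>p<d. hatv x $ j * m $ p * dft_exp d ((int p + int l) * (int k - int j))) / of_nat d"
proof -
  define n0 where "n0 p = nat ((int p + int l) mod int d)" for p
  have "n0 p < d" "int (n0 p) = (int p + int l) mod int d" for p
    unfolding n0_def using assms(3) by (simp_all add: nat_less_iff)
  have "window_ft d x m k l = (\<Sum>p<d. x $ n0 p * m $ p * dft_exp d (int (n0 p) * int k))"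
    unfolding window_ft_def idx_def assms(2) n0_def
    using sum_if_dvd_shift[OF assms(3), of "\<lambda>n p. x $ n * m $ p * dft_exp d (int n * int k)" "int l"]
    by simp
  also have "\<dots> = (\<Sum>p<d. (\<Sum>j<d. hatv x $ j * m $ p * dft_exp d ((int p + int l) * (int k - int j))) / of_nat d)"
  proof (rule sum.cong[OF refl])
    fix p
    have "dft_exp d (- (int (n0 p) * int j)) * dft_exp d (int (n0 p) * int k)
        = dft_exp d ((int p + int l) * (int k - int j))" for j
      unfolding dft_exp_add[symmetric] \<open>int (n0 p) = _\<close>
      using dft_exp_mod_mult[OF assms(3), of "int p + int l" "int k - int j"]
      by (simp add: algebra_simps)
    then have "x $ n0 p * dft_exp d (int (n0 p) * int k)
        = (\<Sum>j<d. hatv x $ j * dft_exp d ((int p + int l) * (int k - int j))) / of_nat d"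
      by (subst inverse_dft[OF assms(1) \<open>n0 p < d\<close>]) (simp add: sum_divide_distrib sum_distrib_right mult.assoc)
    then show "x $ n0 p * m $ p * dft_exp d (int (n0 p) * int k)
        = (\<Sum>j<d. hatv x $ j * m $ p * dft_exp d ((int p + int l) * (int k - int j))) / of_nat d"
      by (simp add: sum_distrib_left sum_divide_distrib mult_ac)
  qed
  also have "\<dots> = (\<Sum>j<d. \<Sum>p<d. hatv x $ j * m $ p * dft_exp d ((int p + int l) * (int k - int j))) / of_nat d"
    unfolding sum_divide_distrib[symmetric] by (rule arg_cong[where f="\<lambda>z. z / of_nat d"], rule sum.swap)
  finally show ?thesis .
qed

lemma norm_window_ft_sq:
  assumes "dim_vec x = d" "dim_vec m = d" "0 < d"
  shows "complex_of_real ((cmod (window_ft d x m k l))\<^sup>2) =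
    (\<Sum>j<d. \<Sum>p<d. \<Sum>j'<d. \<Sum>p'<d. hatv x $ j * m $ p * cnj (hatv x $ j' * m $ p') / (of_nat d)\<^sup>2
       * dft_exp d ((int p + int l) * (int k - int j) - (int p' + int l) * (int k - int j')))"
proof -
  define T where "T j p = hatv x $ j * m $ p * dft_exp d ((int p + int l) * (int k - int j))" for j p
  have g: "window_ft d x m k l = (\<Sum>j<d. \<Sum>p<d. T j p) / of_nat d"
    unfolding T_def by (rule window_ft_via_hatv[OF assms])
  have "T j p * cnj (T j' p') = hatv x $ j * m $ p * cnj (hatv x $ j' * m $ p')
       * dft_exp d ((int p + int l) * (int k - int j) - (int p' + int l) * (int k - int j'))" for j p j' p'
    unfolding T_def diff_conv_add_uminus dft_exp_add by (simp add: cnj_dft_exp mult_ac)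
  moreover have "complex_of_real ((cmod (window_ft d x m k l))\<^sup>2)
      = (\<Sum>j<d. \<Sum>p<d. T j p) * (\<Sum>j'<d. \<Sum>p'<d. cnj (T j' p')) / (of_nat d)\<^sup>2"
    unfolding complex_norm_square g by (simp add: cnj_sum power2_eq_square)
  moreover have "(\<Sum>j<d. \<Sum>p<d. T j p) * (\<Sum>j'<d. \<Sum>p'<d. cnj (T j' p'))
      = (\<Sum>j<d. \<Sum>p<d. \<Sum>j'<d. \<Sum>p'<d. T j p * cnj (T j' p'))"
    by (simp only: sum_distrib_right, simp only: sum_distrib_left)
  ultimately show ?thesis
    by (simp add: sum_divide_distrib)
qed

lemma dft_exp_sampled_phase:
  assumes "d = K * qK" "d = L * qL" "0 < d"
  shows "dft_exp d ((p + l * int qL) * (k * int qK - j) - (p' + l * int qL) * (k * int qK - j'))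
    = dft_exp d (p' * j' - p * j) * (dft_exp K (k * (p - p')) * dft_exp L (l * (j' - j)))"
proof -
  have "(p + l * int qL) * (k * int qK - j) - (p' + l * int qL) * (k * int qK - j')
      = (p' * j' - p * j) + (k * int qK * (p - p') + l * int qL * (j' - j))"
    by (simp add: algebra_simps)
  then show ?thesis
    using dft_exp_rescale[OF assms(1,3)] dft_exp_rescale[OF assms(2,3)]
    by (simp only: dft_exp_add)
qed

subsection \<open>Two-dimensional DFT of the subsampled intensities\<close>

definition dft2 :: "nat \<Rightarrow> nat \<Rightarrow> (nat \<Rightarrow> nat \<Rightarrow> complex) \<Rightarrow> nat \<Rightarrow> nat \<Rightarrow> complex" where
  "dft2 K L f \<alpha> \<omega> = (\<Sum>k<K. \<Sum>l<L. dft_exp L (int \<alpha> * int l) * f k l * dft_exp K (int \<omega> * int k))"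

lemma tildeT_nth:
  assumes "A \<in> carrier_mat K L" "\<alpha> < L" "\<omega> < K"
  shows "tildeT K L A $$ (\<alpha>, \<omega>) = dft2 K L (\<lambda>k l. complex_of_real (A $$ (k, l))) \<alpha> \<omega>"
  using assms unfolding tildeT_def dft2_def
  by (auto simp: dft_mat_eq scalar_prod_def atLeast0LessThan sum_distrib_right sum_distrib_left
      mult.commute intro!: sum.cong)

lemma dft2_cong:
  assumes "\<And>k l. k < K \<Longrightarrow> l < L \<Longrightarrow> f k l = g k l"
  shows "dft2 K L f \<alpha> \<omega> = dft2 K L g \<alpha> \<omega>"
  using assms unfolding dft2_def by simp

lemma dft2_add: "dft2 K L (\<lambda>k l. f k l + g k l) \<alpha> \<omega> = dft2 K L f \<alpha> \<omega> + dft2 K L g \<alpha> \<omega>"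
  unfolding dft2_def by (simp add: algebra_simps sum.distrib)

lemma dft2_sum: "dft2 K L (\<lambda>k l. \<Sum>i\<in>I. f i k l) \<alpha> \<omega> = (\<Sum>i\<in>I. dft2 K L (f i) \<alpha> \<omega>)"
  unfolding dft2_def sum_distrib_left sum_distrib_right by (rule sum_swap_out)

lemma dft2_characters:
  assumes "0 < K" "0 < L"
  shows "dft2 K L (\<lambda>k l. c * (dft_exp K (int k * a) * dft_exp L (int l * b))) \<alpha> \<omega>
    = c * ((if int K dvd int \<omega> + a then of_nat K else 0) * (if int L dvd int \<alpha> + b then of_nat L else 0))"
proof -
  have "dft2 K L (\<lambda>k l. c * (dft_exp K (int k * a) * dft_exp L (int l * b))) \<alpha> \<omega>
      = (\<Sum>k<K. \<Sum>l<L. c * (dft_exp K (int k * (int \<omega> + a)) * dft_exp L (int l * (int \<alpha> + b))))"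
    unfolding dft2_def by (intro sum.cong refl) (simp add: distrib_left dft_exp_add mult_ac)
  also have "\<dots> = c * ((\<Sum>k<K. dft_exp K (int k * (int \<omega> + a))) * (\<Sum>l<L. dft_exp L (int l * (int \<alpha> + b))))"
    by (subst sum_product) (simp add: sum_distrib_left)
  also have "\<dots> = c * ((if int K dvd int \<omega> + a then of_nat K else 0) * (if int L dvd int \<alpha> + b then of_nat L else 0))"
    using assms by (simp only: sum_dft_exp)
  finally show ?thesis .
qed

definition corr_coeff :: "nat \<Rightarrow> complex vec \<Rightarrow> complex vec \<Rightarrow> nat \<Rightarrow> nat \<Rightarrow> nat \<Rightarrow> nat \<Rightarrow> complex" where
  "corr_coeff d x m j p j' p' = hatv x $ j * m $ p * cnj (hatv x $ j' * m $ p') / (of_nat d)\<^sup>2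
     * dft_exp d (int p' * int j' - int p * int j)"

lemma dft2_sampled_intensity:
  assumes "dim_vec x = d" "dim_vec m = d" "d = K * qK" "d = L * qL" "0 < d"
  shows "dft2 K L (\<lambda>k l. complex_of_real ((cmod (window_ft d x m (k * qK) (l * qL)))\<^sup>2)) \<alpha> \<omega>
    = (\<Sum>j<d. \<Sum>p<d. \<Sum>j'<d. \<Sum>p'<d. corr_coeff d x m j p j' p' *
        ((if int K dvd int \<omega> + (int p - int p') then of_nat K else 0) *
         (if int L dvd int \<alpha> + (int j' - int j) then of_nat L else 0)))"
proof -
  have "0 < K" "0 < L"
    using assms(3-5) by (auto intro: gr0I)
  have "complex_of_real ((cmod (window_ft d x m (k * qK) (l * qL)))\<^sup>2)
      = (\<Sum>j<d. \<Sum>p<d. \<Sum>j'<d. \<Sum>p'<d. corr_coeff d x m j p j' p' *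
          (dft_exp K (int k * (int p - int p')) * dft_exp L (int l * (int j' - int j))))" for k l
    unfolding norm_window_ft_sq[OF assms(1,2,5)] of_nat_mult dft_exp_sampled_phase[OF assms(3-5)]
      corr_coeff_def
    by (simp add: mult.assoc)
  then show ?thesis
    by (simp add: dft2_sum dft2_characters[OF \<open>0 < K\<close> \<open>0 < L\<close>])
qed

lemma sum_corr_coeff_shifted:
  assumes "dim_vec x = d" "dim_vec m = d" "0 < d"
  shows "(\<Sum>j<d. \<Sum>p<d. corr_coeff d x m j p (nat ((int j - s) mod int d)) (nat ((int p + t) mod int d)))
    = idx (dft_mat d *\<^sub>v hadamard (hatv x) (shiftv (- s) (conjv (hatv x)))) t
      * idx (dft_mat d *\<^sub>v hadamard (hatv m) (shiftv s (conjv (hatv m)))) t / of_nat d ^ 3"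
proof -
  define a where "a j = hatv x $ j * cnj (hatv x $ nat ((int j - s) mod int d)) * dft_exp d (int j * t)" for j
  define b where "b p = m $ p * cnj (m $ nat ((int p + t) mod int d)) * dft_exp d (- ((int p + t) * s))" for p
  have phase: "dft_exp d ((int p + t) mod int d * ((int j - s) mod int d) - int p * int j)
      = dft_exp d (int j * t) * dft_exp d (- ((int p + t) * s))" for j p
  proof -
    have "dft_exp d ((int p + t) mod int d * ((int j - s) mod int d) - int p * int j)
        = dft_exp d ((int p + t) * (int j - s) - int p * int j)"
      using dft_exp_mod_mult_add[OF assms(3), of "int p + t" "int j - s" "- (int p * int j)"] by simp
    also have "\<dots> = dft_exp d (int j * t + - ((int p + t) * s))"
      by (rule arg_cong[where f="dft_exp d"]) (simp add: algebra_simps)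
    finally show ?thesis
      by (simp only: dft_exp_add)
  qed
  have int_nat_mod: "int (nat (c mod int d)) = c mod int d" for c
    using assms(3) by simp
  have "corr_coeff d x m j p (nat ((int j - s) mod int d)) (nat ((int p + t) mod int d))
      = a j * b p / (of_nat d)\<^sup>2" for j p
    unfolding corr_coeff_def a_def b_def int_nat_mod phase by (simp add: mult_ac)
  then have "(\<Sum>j<d. \<Sum>p<d. corr_coeff d x m j p (nat ((int j - s) mod int d)) (nat ((int p + t) mod int d)))
      = (\<Sum>j<d. a j) * (of_nat d * (\<Sum>p<d. b p)) / of_nat d ^ 3"
    using assms(3) by (simp add: sum_product sum_divide_distrib power2_eq_square power3_eq_cube)
  also have "\<dots> = idx (dft_mat d *\<^sub>v hadamard (hatv x) (shiftv (- s) (conjv (hatv x)))) t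
      * idx (dft_mat d *\<^sub>v hadamard (hatv m) (shiftv s (conjv (hatv m)))) t / of_nat d ^ 3"
    unfolding a_def b_def idx_dft_hadamard_shift[OF assms(1,3)] idx_dft_hadamard_shift_time[OF assms(2,3)]
    by simp
  finally show ?thesis .
qed

text \<open>Only one alias of each comb survives: the supports of \<open>hatv x\<close> and \<open>m\<close> confine the
  differences \<open>j' - j\<close> and \<open>p - p'\<close> to windows shorter than \<open>L\<close> and \<open>K\<close>.\<close>

lemma sum_corr_coeff_combs:
  assumes "0 < d" "K dvd d" "L dvd d"
    and supp_x: "\<forall>k<d. hatv x $ k \<noteq> 0 \<longrightarrow> k < \<gamma>" and supp_m: "\<forall>n<d. m $ n \<noteq> 0 \<longrightarrow> n < \<delta>"
    and "int L dvd int \<alpha> - s" "int K dvd int \<omega> - t"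
    and win_L: "\<And>j j'. j < \<gamma> \<Longrightarrow> j' < \<gamma> \<Longrightarrow> \<bar>int j' - int j + s\<bar> < int L"
    and win_K: "\<And>p p'. p < \<delta> \<Longrightarrow> p' < \<delta> \<Longrightarrow> \<bar>int p - int p' + t\<bar> < int K"
  shows "(\<Sum>j<d. \<Sum>p<d. \<Sum>j'<d. \<Sum>p'<d. corr_coeff d x m j p j' p' *
        ((if int K dvd int \<omega> + (int p - int p') then of_nat K else 0) *
         (if int L dvd int \<alpha> + (int j' - int j) then of_nat L else 0)))
    = of_nat K * of_nat L *
      (\<Sum>j<d. \<Sum>p<d. corr_coeff d x m j p (nat ((int j - s) mod int d)) (nat ((int p + t) mod int d)))"
proof -
  have "int K \<le> int d" "int L \<le> int d"
    using assms(1-3) by (simp_all add: dvd_imp_le)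
  have comb: "corr_coeff d x m j p j' p' *
        ((if int K dvd int \<omega> + (int p - int p') then of_nat K else 0) *
         (if int L dvd int \<alpha> + (int j' - int j) then of_nat L else 0))
      = (if int d dvd int p' - (int p + t) then
           if int d dvd int j' - (int j - s) then of_nat K * of_nat L * corr_coeff d x m j p j' p' else 0
         else 0)"
    if "j < d" "p < d" "j' < d" "p' < d" for j p j' p'
  proof (cases "corr_coeff d x m j p j' p' = 0")
    case False
    then have "j < \<gamma>" "j' < \<gamma>" "p < \<delta>" "p' < \<delta>"
      using that supp_x supp_m unfolding corr_coeff_def by auto
    then have "int L dvd int \<alpha> + (int j' - int j) \<longleftrightarrow> int d dvd int j' - (int j - s)"
      and "int K dvd int \<omega> + (int p - int p') \<longleftrightarrow> int d dvd int p' - (int p + t)"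
      using dvd_add_iff_dvd_in_window[OF \<open>int L dvd _\<close> win_L \<open>int L \<le> _\<close>, of j j']
        dvd_add_iff_dvd_in_window[OF \<open>int K dvd _\<close> win_K \<open>int K \<le> _\<close>, of p p']
        dvd_minus_iff[of "int d" "int p' - (int p + t)"]
      by (simp_all add: algebra_simps)
    then show ?thesis
      by simp
  qed simp
  then show ?thesis
    using assms(1) by (simp add: sum_if_dvd_diff sum_distrib_left)
qed

lemma subsamp_nth:
  assumes "K dvd d" "L dvd d" "k < K" "l < L"
  shows "subsamp d K L A $$ (k, l) = A $$ (k * (d div K), l * (d div L))"
  using assms by (simp add: subsamp_def div_mult_swap)

lemma mult_div_less:
  fixes d K k :: nat
  assumes "K dvd d" "0 < d" "k < K"
  shows "k * (d div K) < d"
proof -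
  obtain q where "d = K * q"
    using assms(1) by blast
  moreover have "0 < K"
    using assms(3) by linarith
  ultimately have "0 < q" "d div K = q"
    using assms(2) by simp_all
  with \<open>d = K * q\<close> assms(3) show ?thesis
    by simp
qed

lemma tildeT_meas_nth:
  assumes "0 < d" "dim_vec x = d" "dim_vec m = d" "K dvd d" "L dvd d" "\<alpha> < L" "\<omega> < K"
    and "\<forall>k<d. hatv x $ k \<noteq> 0 \<longrightarrow> k < \<gamma>" "\<forall>n<d. m $ n \<noteq> 0 \<longrightarrow> n < \<delta>"
    and "int L dvd int \<alpha> - s" "int K dvd int \<omega> - t"
    and "\<And>j j'. j < \<gamma> \<Longrightarrow> j' < \<gamma> \<Longrightarrow> \<bar>int j' - int j + s\<bar> < int L"
    and "\<And>p p'. p < \<delta> \<Longrightarrow> p' < \<delta> \<Longrightarrow> \<bar>int p - int p' + t\<bar> < int K"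
  shows "tildeT K L (subsamp d K L (meas d x m N)) $$ (\<alpha>, \<omega>)
    = complex_of_real (real K * real L / real d ^ 3)
      * idx (dft_mat d *\<^sub>v hadamard (hatv x) (shiftv (- s) (conjv (hatv x)))) t
      * idx (dft_mat d *\<^sub>v hadamard (hatv m) (shiftv s (conjv (hatv m)))) t
      + tildeT K L (subsamp d K L N) $$ (\<alpha>, \<omega>)"
proof -
  define qK qL where "qK = d div K" and "qL = d div L"
  have "d = K * qK" "d = L * qL"
    using assms(4,5) unfolding qK_def qL_def by simp_all
  have carrier: "subsamp d K L A \<in> carrier_mat K L" for A
    by (simp add: subsamp_def)
  have "subsamp d K L (meas d x m N) $$ (k, l)
      = (cmod (window_ft d x m (k * qK) (l * qL)))\<^sup>2 + subsamp d K L N $$ (k, l)"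
    if "k < K" "l < L" for k l
    using that assms(1,4,5) mult_div_less[OF assms(4,1) that(1)] mult_div_less[OF assms(5,1) that(2)]
    unfolding qK_def qL_def by (simp add: subsamp_nth meas_nth)
  then have "tildeT K L (subsamp d K L (meas d x m N)) $$ (\<alpha>, \<omega>)
      = dft2 K L (\<lambda>k l. complex_of_real ((cmod (window_ft d x m (k * qK) (l * qL)))\<^sup>2)) \<alpha> \<omega>
        + tildeT K L (subsamp d K L N) $$ (\<alpha>, \<omega>)"
    unfolding tildeT_nth[OF carrier assms(6,7)] dft2_add[symmetric] by (intro dft2_cong) simp
  moreover have "dft2 K L (\<lambda>k l. complex_of_real ((cmod (window_ft d x m (k * qK) (l * qL)))\<^sup>2)) \<alpha> \<omega>
      = of_nat K * of_nat L * (\<Sum>j<d. \<Sum>p<d.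
          corr_coeff d x m j p (nat ((int j - s) mod int d)) (nat ((int p + t) mod int d)))"
    unfolding dft2_sampled_intensity[OF assms(2,3) \<open>d = K * qK\<close> \<open>d = L * qL\<close> assms(1)]
    by (rule sum_corr_coeff_combs[OF assms(1,4,5,8-13)])
  ultimately show ?thesis
    unfolding sum_corr_coeff_shifted[OF assms(2,3,1)] by simp
qed

lemma alias_window:
  assumes "M = w - 1 + r" "1 \<le> r" "a < M"
    and "(a \<le> r - 1 \<and> s = int a) \<or> (w \<le> a \<and> s = int a - int M)"
  shows "int M dvd int a - s" "\<And>i i'. i < w \<Longrightarrow> i' < w \<Longrightarrow> \<bar>int i - int i' + s\<bar> < int M"
  using assms by auto

theorem mainTheorem5:
  fixes x m :: "complex vec" and N :: "real mat" and d K L \<gamma> \<delta> \<kappa> \<xi> :: nat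
  assumes "0 < d" and "dim_vec x = d" and "dim_vec m = d" and "N \<in> carrier_mat d d"
    and "\<forall>k<d. hatv x $ k \<noteq> 0 \<longrightarrow> k < \<gamma>"
    and "\<forall>n<d. m $ n \<noteq> 0 \<longrightarrow> n < \<delta>"
    and "K dvd d" and "L dvd d"
    and "K = \<delta> - 1 + \<kappa>" and "2 \<le> \<kappa>" and "\<kappa> \<le> \<delta>"
    and "L = \<gamma> - 1 + \<xi>" and "1 \<le> \<xi>" and "\<xi> \<le> \<gamma>"
  shows "let Yt = tildeT K L (subsamp d K L (meas d x m N));
             Nt = tildeT K L (subsamp d K L N);
             c = complex_of_real (real K * real L / real d ^ 3);
             A = (\<lambda>s::int. dft_mat d *\<^sub>v hadamard (hatv x) (shiftv s (conjv (hatv x))));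
             B = (\<lambda>s::int. dft_mat d *\<^sub>v hadamard (hatv m) (shiftv s (conjv (hatv m))))
         in \<forall>\<alpha><L. \<forall>\<omega><K.
           (\<alpha> \<le> \<xi> - 1 \<and> \<omega> \<le> \<kappa> - 1 \<longrightarrow>
              Yt $$ (\<alpha>,\<omega>) = c * idx (A (- int \<alpha>)) (int \<omega>) * idx (B (int \<alpha>)) (int \<omega>) + Nt $$ (\<alpha>,\<omega>)) \<and>
           (\<alpha> \<le> \<xi> - 1 \<and> \<delta> \<le> \<omega> \<longrightarrow>
              Yt $$ (\<alpha>,\<omega>) = c * idx (A (- int \<alpha>)) (int \<omega> - int K) * idx (B (int \<alpha>)) (int \<omega> - int K) + Nt $$ (\<alpha>,\<omega>)) \<and>
           (\<gamma> \<le> \<alpha> \<and> \<omega> \<le> \<kappa> - 1 \<longrightarrow>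
              Yt $$ (\<alpha>,\<omega>) = c * idx (A (int L - int \<alpha>)) (int \<omega>) * idx (B (int \<alpha> - int L)) (int \<omega>) + Nt $$ (\<alpha>,\<omega>)) \<and>
           (\<gamma> \<le> \<alpha> \<and> \<delta> \<le> \<omega> \<longrightarrow>
              Yt $$ (\<alpha>,\<omega>) = c * idx (A (int L - int \<alpha>)) (int \<omega> - int K) * idx (B (int \<alpha> - int L)) (int \<omega> - int K) + Nt $$ (\<alpha>,\<omega>))"
proof -
  have "1 \<le> \<kappa>"
    using assms(10) by simp
  have entry: "tildeT K L (subsamp d K L (meas d x m N)) $$ (\<alpha>, \<omega>)
      = complex_of_real (real K * real L / real d ^ 3)
        * idx (dft_mat d *\<^sub>v hadamard (hatv x) (shiftv s' (conjv (hatv x)))) t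
        * idx (dft_mat d *\<^sub>v hadamard (hatv m) (shiftv s (conjv (hatv m)))) t
        + tildeT K L (subsamp d K L N) $$ (\<alpha>, \<omega>)"
    if "\<alpha> < L" "\<omega> < K" "s' = - s"
      and "(\<alpha> \<le> \<xi> - 1 \<and> s = int \<alpha>) \<or> (\<gamma> \<le> \<alpha> \<and> s = int \<alpha> - int L)"
      and "(\<omega> \<le> \<kappa> - 1 \<and> t = int \<omega>) \<or> (\<delta> \<le> \<omega> \<and> t = int \<omega> - int K)"
    for \<alpha> \<omega> s s' t
  proof -
    note L_window = alias_window[OF assms(12,13) that(1,4)]
    note K_window = alias_window[OF assms(9) \<open>1 \<le> \<kappa>\<close> that(2,5)]
    show ?thesis
      using tildeT_meas_nth[OF assms(1-3,7,8) that(1,2) assms(5,6) L_window(1) K_window(1)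
          L_window(2) K_window(2)] that(3)
      by simp
  qed
  show ?thesis
    unfolding Let_def by (intro allI impI conjI; rule entry) auto
qed

end
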